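(* Let $G$ be an $n\times n$ bimatrix game with payoff matrices $R,C\in[0,1]^{n\times n}$, and let $\epsilon,\Delta\ge 0$. Then $G$ satisfies the well-supported $(2\epsilon,\Delta)$-approximation stability condition if and only if $G$ satisfies the $(\epsilon,\Delta)$-stability to perturbations condition.
   Context: The row player receives $R_{i,j}$ and the column player $C_{i,j}$ when row plays $i$ and column plays $j$. Mixed strategies $p,q$ are probability vectors in $\mathbb{R}^n$; payoffs are $p^TRq$ and $p^TCq$; $e_i$ denotes the $i$-th unit vector; $\mathrm{supp}(p)=\{i:p_i>0\}$. $(p,q)$ is a Nash equilibrium if $e_i^TRq\le p^TRq$ and $p^TCe_j\le p^TCq$ for all $i,j$. $(p,q)$ is a well-supported $\epsilon$-equilibrium if for every $i\in\mathrm{supp}(p)$ and every $j$, $e_i^TRq\ge e_j^TRq-\epsilon$, and for every $i\in\mathrm{supp}(q)$ and every $j$, $p^TCe_i\ge p^TCe_j-\epsilon$. The distance is $d(p,p')=\frac12\sum_i|p_i-p'_i|$ and $d((p,q),(p',q'))=\max(d(p,p'),d(q,q'))$; $(p,q)$ is $\Delta$-close to $(p',q')$ if this distance is at most $\Delta$. A game $G'$ with matrices $R',C'$ is an $L_\infty$ $\alpha$-perturbation of $G$ if $|R_{i,j}-R'_{i,j}|\le\alpha$ and $|C_{i,j}-C'_{i,j}|\le\alpha$ for all $i,j$ (entries of $G'$ need not lie in $[0,1]$). $G$ satisfies the $(\epsilon,\Delta)$-stability to perturbations condition if for every $L_\infty$ $\epsilon$-perturbation $G'$ of $G$ and every Nash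 equilibrium $(p,q)$ of $G'$ there is a Nash equilibrium of $G$ that is $\Delta$-close to $(p,q)$. $G$ satisfies the well-supported $(\epsilon,\Delta)$-approximation stability condition if every well-supported $\epsilon$-equilibrium of $G$ is $\Delta$-close to some Nash equilibrium of $G$. *)

theory Defs
  imports "HOL-Analysis.Analysis"
begin

type_synonym mat = "nat \<Rightarrow> nat \<Rightarrow> real"
type_synonym strat = "nat \<Rightarrow> real"

definition is_strategy :: "nat \<Rightarrow> strat \<Rightarrow> bool" where
  "is_strategy n p \<longleftrightarrow> (\<forall>i<n. p i \<ge> 0) \<and> (\<forall>i\<ge>n. p i = 0) \<and> (\<Sum>i<n. p i) = 1"

definition supp :: "nat \<Rightarrow> strat \<Rightarrow> nat set" where
  "supp n p = {i. i < n \<and> p i > 0}"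

definition payoff :: "nat \<Rightarrow> mat \<Rightarrow> strat \<Rightarrow> strat \<Rightarrow> real" where
  "payoff n A p q = (\<Sum>i<n. \<Sum>j<n. p i * A i j * q j)"

definition row_payoff :: "nat \<Rightarrow> mat \<Rightarrow> nat \<Rightarrow> strat \<Rightarrow> real" where
  "row_payoff n A i q = (\<Sum>j<n. A i j * q j)"

definition col_payoff :: "nat \<Rightarrow> mat \<Rightarrow> strat \<Rightarrow> nat \<Rightarrow> real" where
  "col_payoff n A p j = (\<Sum>i<n. p i * A i j)"

definition nash_eq :: "nat \<Rightarrow> mat \<Rightarrow> mat \<Rightarrow> strat \<Rightarrow> strat \<Rightarrow> bool" where
  "nash_eq n R C p q \<longleftrightarrow> is_strategy n p \<and> is_strategy n q \<and>
     (\<forall>i<n. row_payoff n R i q \<le> payoff n R p q) \<and>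
     (\<forall>j<n. col_payoff n C p j \<le> payoff n C p q)"

definition ws_approx_eq :: "nat \<Rightarrow> mat \<Rightarrow> mat \<Rightarrow> real \<Rightarrow> strat \<Rightarrow> strat \<Rightarrow> bool" where
  "ws_approx_eq n R C \<epsilon> p q \<longleftrightarrow> is_strategy n p \<and> is_strategy n q \<and>
     (\<forall>i\<in>supp n p. \<forall>j<n. row_payoff n R i q \<ge> row_payoff n R j q - \<epsilon>) \<and>
     (\<forall>i\<in>supp n q. \<forall>j<n. col_payoff n C p i \<ge> col_payoff n C p j - \<epsilon>)"

definition sdist :: "nat \<Rightarrow> strat \<Rightarrow> strat \<Rightarrow> real" where
  "sdist n p p' = (1/2) * (\<Sum>i<n. \<bar>p i - p' i\<bar>)"

definition pdist :: "nat \<Rightarrow> strat \<times> strat \<Rightarrow> strat \<times> strat \<Rightarrow> real" where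
  "pdist n pq pq' = max (sdist n (fst pq) (fst pq')) (sdist n (snd pq) (snd pq'))"

definition delta_close :: "nat \<Rightarrow> real \<Rightarrow> strat \<times> strat \<Rightarrow> strat \<times> strat \<Rightarrow> bool" where
  "delta_close n \<Delta> pq pq' \<longleftrightarrow> pdist n pq pq' \<le> \<Delta>"

(* G' = (R',C') is an L_infinity alpha-perturbation of G = (R,C); entries of G' are arbitrary reals *)
definition linf_perturbation :: "nat \<Rightarrow> real \<Rightarrow> mat \<Rightarrow> mat \<Rightarrow> mat \<Rightarrow> mat \<Rightarrow> bool" where
  "linf_perturbation n \<alpha> R C R' C' \<longleftrightarrow>
     (\<forall>i<n. \<forall>j<n. \<bar>R i j - R' i j\<bar> \<le> \<alpha> \<and> \<bar>C i j - C' i j\<bar> \<le> \<alpha>)"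

definition stable_to_perturbations :: "nat \<Rightarrow> mat \<Rightarrow> mat \<Rightarrow> real \<Rightarrow> real \<Rightarrow> bool" where
  "stable_to_perturbations n R C \<epsilon> \<Delta> \<longleftrightarrow>
     (\<forall>R' C'. linf_perturbation n \<epsilon> R C R' C' \<longrightarrow>
        (\<forall>p q. nash_eq n R' C' p q \<longrightarrow>
           (\<exists>p' q'. nash_eq n R C p' q' \<and> delta_close n \<Delta> (p', q') (p, q))))"

definition ws_approx_stable :: "nat \<Rightarrow> mat \<Rightarrow> mat \<Rightarrow> real \<Rightarrow> real \<Rightarrow> bool" where
  "ws_approx_stable n R C \<epsilon> \<Delta> \<longleftrightarrow>
     (\<forall>p q. ws_approx_eq n R C \<epsilon> p q \<longrightarrow>
        (\<exists>p' q'. nash_eq n R C p' q' \<and> delta_close n \<Delta> (p, q) (p', q')))"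

end

theory Submission
  imports Defs
begin

text \<open>
  A Nash equilibrium is the same thing as a well-supported 0-equilibrium. Perturbing the
  entries of a game by at most \<open>\<epsilon>\<close> moves every pure-strategy payoff by at most \<open>\<epsilon>\<close>, so a Nash
  equilibrium of an \<open>\<epsilon>\<close>-perturbation of \<open>G\<close> is a well-supported \<open>2\<epsilon>\<close>-equilibrium of \<open>G\<close>.
  Conversely, if \<open>(p, q)\<close> is a well-supported \<open>2\<epsilon>\<close>-equilibrium and \<open>M\<close> is the best pure payoff
  of the row player against \<open>q\<close>, adding \<open>min \<epsilon> (M - \<epsilon> - e\<^sub>i\<^sup>T R q)\<close> to row \<open>i\<close> of \<open>R\<close> raises every
  row of \<open>supp p\<close> exactly to \<open>M - \<epsilon>\<close> and keeps all other rows below it; doing the same for the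
  columns of \<open>C\<close> makes \<open>(p, q)\<close> an exact equilibrium of an \<open>\<epsilon>\<close>-perturbation. So both stability
  conditions quantify over the same strategy profiles.
\<close>

definition best_response :: "nat \<Rightarrow> (nat \<Rightarrow> real) \<Rightarrow> strat \<Rightarrow> bool" where
  "best_response n r p \<longleftrightarrow> (\<forall>j<n. r j \<le> (\<Sum>k<n. p k * r k))"

definition well_supported :: "nat \<Rightarrow> real \<Rightarrow> (nat \<Rightarrow> real) \<Rightarrow> strat \<Rightarrow> bool" where
  "well_supported n \<epsilon> r p \<longleftrightarrow> (\<forall>i\<in>supp n p. \<forall>j<n. r i \<ge> r j - \<epsilon>)"

lemma supp_subset_lessThan: "supp n p \<subseteq> {..<n}"
  unfolding supp_def by auto

lemma best_response_supp_eq: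
  assumes "is_strategy n p" and "best_response n r p" and "i \<in> supp n p"
  shows "r i = (\<Sum>k<n. p k * r k)"
proof -
  let ?v = "\<Sum>k<n. p k * r k"
  have sum_p: "(\<Sum>k<n. p k) = 1" and p_nonneg: "\<And>k. k < n \<Longrightarrow> p k \<ge> 0"
    using assms(1) unfolding is_strategy_def by auto
  have "(\<Sum>k<n. p k * (?v - r k)) = ?v * (\<Sum>k<n. p k) - ?v"
    by (simp add: right_diff_distrib sum_subtractf mult.commute flip: sum_distrib_right)
  then have "(\<Sum>k<n. p k * (?v - r k)) = 0"
    using sum_p by simp
  moreover have "\<forall>k\<in>{..<n}. 0 \<le> p k * (?v - r k)"
    using assms(2) p_nonneg unfolding best_response_def by simp
  ultimately have "\<forall>k\<in>{..<n}. p k * (?v - r k) = 0"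
    using sum_nonneg_eq_0_iff[of "{..<n}" "\<lambda>k. p k * (?v - r k)"] by blast
  then have "p i * (?v - r i) = 0"
    using assms(3) unfolding supp_def by blast
  then show ?thesis
    using assms(3) unfolding supp_def by simp
qed

lemma best_response_iff_well_supported_zero:
  assumes "is_strategy n p"
  shows "best_response n r p \<longleftrightarrow> well_supported n 0 r p"
proof
  assume best: "best_response n r p"
  then show "well_supported n 0 r p"
    using best_response_supp_eq[OF assms best]
    unfolding well_supported_def best_response_def by simp
next
  have sum_p: "(\<Sum>k<n. p k) = 1" and p_nonneg: "\<And>k. k < n \<Longrightarrow> p k \<ge> 0"
    using assms unfolding is_strategy_def by auto
  assume ws: "well_supported n 0 r p"
  show "best_response n r p"
    unfolding best_response_def
  proof (intro allI impI)
    fix j assume "j < n"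
    have "r j = (\<Sum>k<n. p k * r j)"
      using sum_p by (simp flip: sum_distrib_right)
    also have "\<dots> \<le> (\<Sum>k<n. p k * r k)"
    proof (rule sum_mono)
      fix k assume k: "k \<in> {..<n}"
      show "p k * r j \<le> p k * r k"
      proof (cases "p k > 0")
        case True
        then have "r j \<le> r k"
          using ws k \<open>j < n\<close> unfolding well_supported_def supp_def by fastforce
        then show ?thesis
          using True by simp
      next
        case False
        then have "p k = 0"
          using p_nonneg[of k] k by simp
        then show ?thesis
          by simp
      qed
    qed
    finally show "r j \<le> (\<Sum>k<n. p k * r k)" .
  qed
qed

lemma well_supported_perturb:
  assumes "\<And>i. i < n \<Longrightarrow> \<bar>r i - r' i\<bar> \<le> \<epsilon>" and "well_supported n \<delta> r' p"
  shows "well_supported n (\<delta> + 2 * \<epsilon>) r p"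
  unfolding well_supported_def
proof (intro ballI allI impI)
  fix i j assume "i \<in> supp n p" and "j < n"
  then have "i < n" and "r' i \<ge> r' j - \<delta>"
    using assms(2) unfolding well_supported_def supp_def by auto
  then show "r i \<ge> r j - (\<delta> + 2 * \<epsilon>)"
    using assms(1)[of i] assms(1)[of j] \<open>j < n\<close> by linarith
qed

lemma well_supported_flatten:
  assumes "well_supported n (2 * \<epsilon>) r p" and "\<epsilon> \<ge> 0"
  obtains c where "\<And>i. i < n \<Longrightarrow> \<bar>c i\<bar> \<le> \<epsilon>" and "well_supported n 0 (\<lambda>i. r i + c i) p"
proof
  define M where "M = Max (r ` {..<n})"
  define c where "c i = min \<epsilon> (M - \<epsilon> - r i)" for i
  have r_le_M: "r i \<le> M" if "i < n" for i
    unfolding M_def using that by simp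
  show "\<bar>c i\<bar> \<le> \<epsilon>" if "i < n" for i
    using r_le_M[OF that] \<open>\<epsilon> \<ge> 0\<close> unfolding c_def by (simp add: abs_le_iff)
  have on_supp: "r i + c i = M - \<epsilon>" if "i \<in> supp n p" for i
  proof -
    have "{..<n} \<noteq> {}"
      using that supp_subset_lessThan by blast
    then have "M \<in> r ` {..<n}"
      unfolding M_def by (intro Max_in) auto
    then obtain i\<^sub>0 where "i\<^sub>0 < n" and "M = r i\<^sub>0"
      by auto
    then have "r i \<ge> M - 2 * \<epsilon>"
      using assms(1) that unfolding well_supported_def by auto
    then show ?thesis
      unfolding c_def by simp
  qed
  have "r j + c j \<le> M - \<epsilon>" for j
    unfolding c_def by simp
  then show "well_supported n 0 (\<lambda>i. r i + c i) p"
    using on_supp unfolding well_supported_def by simp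
qed

lemma payoff_eq_sum_row_payoff: "payoff n A p q = (\<Sum>i<n. p i * row_payoff n A i q)"
  unfolding payoff_def row_payoff_def by (simp add: sum_distrib_left mult.assoc)

lemma payoff_eq_sum_col_payoff: "payoff n A p q = (\<Sum>j<n. q j * col_payoff n A p j)"
  unfolding payoff_def col_payoff_def
  by (subst sum.swap) (simp add: sum_distrib_left algebra_simps)

lemma nash_eq_iff_best_response:
  "nash_eq n R C p q \<longleftrightarrow> is_strategy n p \<and> is_strategy n q \<and>
     best_response n (\<lambda>i. row_payoff n R i q) p \<and> best_response n (col_payoff n C p) q"
  by (simp add: nash_eq_def best_response_def
      payoff_eq_sum_row_payoff[of n R] payoff_eq_sum_col_payoff[of n C])

lemma ws_approx_eq_iff_well_supported:
  "ws_approx_eq n R C \<epsilon> p q \<longleftrightarrow> is_strategy n p \<and> is_strategy n q \<and>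
     well_supported n \<epsilon> (\<lambda>i. row_payoff n R i q) p \<and> well_supported n \<epsilon> (col_payoff n C p) q"
  unfolding ws_approx_eq_def well_supported_def by simp

lemma nash_eq_iff_ws_approx_eq_zero: "nash_eq n R C p q \<longleftrightarrow> ws_approx_eq n R C 0 p q"
  unfolding nash_eq_iff_best_response ws_approx_eq_iff_well_supported
  using best_response_iff_well_supported_zero by blast

lemma weighted_sum_diff_le:
  assumes "is_strategy n q" and "\<And>j. j < n \<Longrightarrow> \<bar>a j - b j\<bar> \<le> \<epsilon>"
  shows "\<bar>(\<Sum>j<n. q j * a j) - (\<Sum>j<n. q j * b j)\<bar> \<le> \<epsilon>"
proof -
  have sum_q: "(\<Sum>j<n. q j) = 1" and q_nonneg: "\<And>j. j < n \<Longrightarrow> q j \<ge> 0"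
    using assms(1) unfolding is_strategy_def by auto
  have "\<bar>(\<Sum>j<n. q j * a j) - (\<Sum>j<n. q j * b j)\<bar> = \<bar>\<Sum>j<n. q j * (a j - b j)\<bar>"
    by (simp add: sum_subtractf right_diff_distrib)
  also have "\<dots> \<le> (\<Sum>j<n. q j * \<bar>a j - b j\<bar>)"
    using sum_abs[of "\<lambda>j. q j * (a j - b j)" "{..<n}"] q_nonneg by (simp add: abs_mult)
  also have "\<dots> \<le> (\<Sum>j<n. q j * \<epsilon>)"
    using assms(2) q_nonneg by (intro sum_mono mult_left_mono) auto
  also have "\<dots> = \<epsilon>"
    using sum_q by (simp flip: sum_distrib_right)
  finally show ?thesis .
qed

lemma ws_approx_eq_perturbation:
  assumes "linf_perturbation n \<epsilon> R C R' C'" and "ws_approx_eq n R' C' \<delta> p q"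
  shows "ws_approx_eq n R C (\<delta> + 2 * \<epsilon>) p q"
proof -
  have p: "is_strategy n p" and q: "is_strategy n q"
    using assms(2) unfolding ws_approx_eq_def by auto
  have rows: "well_supported n (\<delta> + 2 * \<epsilon>) (\<lambda>i. row_payoff n R i q) p"
  proof (rule well_supported_perturb)
    show "\<bar>row_payoff n R i q - row_payoff n R' i q\<bar> \<le> \<epsilon>" if "i < n" for i
      using weighted_sum_diff_le[OF q, of "R i" "R' i"] assms(1) that
      unfolding row_payoff_def linf_perturbation_def by (simp add: mult.commute)
    show "well_supported n \<delta> (\<lambda>i. row_payoff n R' i q) p"
      using assms(2) unfolding ws_approx_eq_iff_well_supported by simp
  qed
  have cols: "well_supported n (\<delta> + 2 * \<epsilon>) (col_payoff n C p) q"
  proof (rule well_supported_perturb)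
    show "\<bar>col_payoff n C p j - col_payoff n C' p j\<bar> \<le> \<epsilon>" if "j < n" for j
      using weighted_sum_diff_le[OF p, of "\<lambda>i. C i j" "\<lambda>i. C' i j"] assms(1) that
      unfolding col_payoff_def linf_perturbation_def by simp
    show "well_supported n \<delta> (col_payoff n C' p) q"
      using assms(2) unfolding ws_approx_eq_iff_well_supported by simp
  qed
  show ?thesis
    unfolding ws_approx_eq_iff_well_supported using p q rows cols by simp
qed

lemma row_payoff_add_row_const:
  assumes "is_strategy n q"
  shows "row_payoff n (\<lambda>i j. R i j + c i) i q = row_payoff n R i q + c i"
  using assms unfolding row_payoff_def is_strategy_def
  by (simp add: distrib_right sum.distrib flip: sum_distrib_left)

lemma col_payoff_add_col_const:
  assumes "is_strategy n p"
  shows "col_payoff n (\<lambda>i j. C i j + d j) p = (\<lambda>j. col_payoff n C p j + d j)"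
  using assms unfolding col_payoff_def is_strategy_def
  by (simp add: distrib_left sum.distrib fun_eq_iff flip: sum_distrib_right)

lemma ws_approx_eq_imp_nash_eq_perturbation:
  assumes "ws_approx_eq n R C (2 * \<epsilon>) p q" and "\<epsilon> \<ge> 0"
  obtains R' C' where "linf_perturbation n \<epsilon> R C R' C'" and "nash_eq n R' C' p q"
proof -
  have p: "is_strategy n p" and q: "is_strategy n q"
    using assms(1) unfolding ws_approx_eq_def by auto
  obtain c where c: "\<And>i. i < n \<Longrightarrow> \<bar>c i\<bar> \<le> \<epsilon>"
    and ws_row: "well_supported n 0 (\<lambda>i. row_payoff n R i q + c i) p"
    using assms(1) well_supported_flatten[OF _ assms(2)] unfolding ws_approx_eq_iff_well_supported by blast
  obtain d where d: "\<And>j. j < n \<Longrightarrow> \<bar>d j\<bar> \<le> \<epsilon>"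
    and ws_col: "well_supported n 0 (\<lambda>j. col_payoff n C p j + d j) q"
    using assms(1) well_supported_flatten[OF _ assms(2)] unfolding ws_approx_eq_iff_well_supported by blast
  show thesis
  proof
    show "linf_perturbation n \<epsilon> R C (\<lambda>i j. R i j + c i) (\<lambda>i j. C i j + d j)"
      unfolding linf_perturbation_def using c d by simp
    show "nash_eq n (\<lambda>i j. R i j + c i) (\<lambda>i j. C i j + d j) p q"
      unfolding nash_eq_iff_ws_approx_eq_zero ws_approx_eq_iff_well_supported
      using p q ws_row ws_col
      by (simp add: row_payoff_add_row_const col_payoff_add_col_const)
  qed
qed

lemma delta_close_commute: "delta_close n \<Delta> a b \<longleftrightarrow> delta_close n \<Delta> b a"
  unfolding delta_close_def pdist_def sdist_def by (simp add: abs_minus_commute)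

theorem theorem1:
  fixes n :: nat and R C :: "nat \<Rightarrow> nat \<Rightarrow> real" and \<epsilon> \<Delta> :: real
  assumes "\<forall>i<n. \<forall>j<n. 0 \<le> R i j \<and> R i j \<le> 1"
      and "\<forall>i<n. \<forall>j<n. 0 \<le> C i j \<and> C i j \<le> 1"
      and "\<epsilon> \<ge> 0" and "\<Delta> \<ge> 0"
  shows "ws_approx_stable n R C (2 * \<epsilon>) \<Delta> \<longleftrightarrow> stable_to_perturbations n R C \<epsilon> \<Delta>"
proof
  assume "ws_approx_stable n R C (2 * \<epsilon>) \<Delta>"
  moreover have "ws_approx_eq n R C (2 * \<epsilon>) p q"
    if "linf_perturbation n \<epsilon> R C R' C'" and "nash_eq n R' C' p q" for R' C' p q
    using ws_approx_eq_perturbation[of n \<epsilon> R C R' C' 0 p q] that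
    unfolding nash_eq_iff_ws_approx_eq_zero by simp
  ultimately show "stable_to_perturbations n R C \<epsilon> \<Delta>"
    unfolding ws_approx_stable_def stable_to_perturbations_def
    using delta_close_commute by metis
next
  assume stable: "stable_to_perturbations n R C \<epsilon> \<Delta>"
  show "ws_approx_stable n R C (2 * \<epsilon>) \<Delta>"
    unfolding ws_approx_stable_def
  proof (intro allI impI)
    fix p q assume "ws_approx_eq n R C (2 * \<epsilon>) p q"
    then obtain R' C' where "linf_perturbation n \<epsilon> R C R' C'" and "nash_eq n R' C' p q"
      using ws_approx_eq_imp_nash_eq_perturbation \<open>\<epsilon> \<ge> 0\<close> by blast
    then show "\<exists>p' q'. nash_eq n R C p' q' \<and> delta_close n \<Delta> (p, q) (p', q')"
      using stable delta_close_commute unfolding stable_to_perturbations_def by metis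
  qed
qed

end
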